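(* Let $\nabla$ be a compatible connection on $\mathfrak{H}_n^\infty$ and let $h_1,\dots,h_N\in\mathbb{M}_n(\mathcal{A}_\theta^\infty)$ be the skew-adjoint elements with $\nabla_k=D_k+\pi(h_k)$. Then the operator $H:=-\sum_k(D_k+\pi(h_k))^2$ with domain $\mathcal{D}(H):=\mathcal{D}(\Delta)$ is self-adjoint.
   Context: $\theta$ is a real antisymmetric $N\times N$ matrix; $\mathcal{A}_\theta$ is the universal $C^*$-algebra generated by unitaries $u_1,\dots,u_N$ with $u_ku_l=\exp(2\pi i\theta_{kl})u_lu_k$; $\mathcal{A}_\theta^\infty$ is its smooth part for the torus action $\sigma_z(u^\alpha)=z^\alpha u^\alpha$, with derivations $\delta_ku_l=i\delta_{kl}u_l$ acting entrywise on matrices as $\delta_k^{(n)}$. $\mathfrak{H}_n=L^2(\mathcal{A}_\theta\otimes\mathbb{M}_n(\mathbb{C}),\tau\otimes\mathrm{tr})\cong L^2(\mathbb{T}^N)\otimes\mathbb{M}_n(\mathbb{C})$; $\eta$ canonical embedding, $\mathfrak{H}_n^\infty=\eta(\mathbb{M}_n(\mathcal{A}_\theta^\infty))$, $D_k\eta(x)=\eta(\delta_k^{(n)}x)$ extended to its usual skew-adjoint domain (the partial derivative), $\pi(a)\eta(x)=\eta(ax)$. $\Delta=-\sum_kD_k^2$ with $\mathcal{D}(\Delta)=\operatorname{span}\{\eta(\sum_\alpha c_\alpha u^\alpha\otimes m):(\|\alpha\|_2^2c_\alpha)_\alpha\in\ell^2(\mathbb{Z}^N)\}$; $\pi(h_k)$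 preserves $\mathcal{D}(\Delta)$ so $H$ is well defined there. A compatible connection on $\mathfrak{H}_n^\infty$ is an $N$-tuple of linear maps $\nabla_k$ with $\nabla_k(\xi a)=(\nabla_k\xi)a+\xi\delta_k^{(n)}(a)$ and $(\nabla_kx)^*y+x^*\nabla_ky=\delta_k^{(n)}(x^*y)$; every such has the form $D_k+\pi(h_k)$ with unique skew-adjoint $h_k\in\mathbb{M}_n(\mathcal{A}_\theta^\infty)$. *)

theory Defs
  imports "HOL-Analysis.Analysis"
begin

text \<open>The GNS space of (A_theta (x) M_n, tau (x) tr) has the
orthonormal basis u^alpha (alpha in Z^N) tensored with matrix units, so
H_n = l^2(Z^N; M_n(C)): a vector is its coefficient function
xi : Z^N -> M_n(C), xi = sum_alpha u^alpha (x) xi(alpha).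
Convention: u^alpha = u_1^alpha_1 ... u_N^alpha_N, the order of the
generators being the linear order of the index type 'N.\<close>

class idx = finite + linorder

type_synonym ('N, 'n) coeff = "(int, 'N) vec \<Rightarrow> complex ^ 'n ^ 'n"

definition cmat_scale :: "complex \<Rightarrow> complex ^ 'n ^ 'n \<Rightarrow> complex ^ 'n ^ 'n" where
  "cmat_scale c M = (\<chi> i j. c * M $ i $ j)"

definition cmat_adj :: "complex ^ 'n ^ 'n \<Rightarrow> complex ^ 'n ^ 'n" where
  "cmat_adj M = (\<chi> i j. cnj (M $ j $ i))"

text \<open>Hilbert--Schmidt (unnormalised trace) inner product tr(A^* B).\<close>
definition cmat_inner :: "complex ^ 'n ^ 'n \<Rightarrow> complex ^ 'n ^ 'n \<Rightarrow> complex" where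
  "cmat_inner A B = (\<Sum>i\<in>UNIV. \<Sum>j\<in>UNIV. cnj (A $ i $ j) * B $ i $ j)"

definition L2 :: "('N::finite, 'n::finite) coeff set" where
  "L2 = {xi. (\<lambda>\<alpha>. (norm (xi \<alpha>))\<^sup>2) summable_on UNIV}"

definition hinner :: "('N::finite, 'n::finite) coeff \<Rightarrow> ('N, 'n) coeff \<Rightarrow> complex" where
  "hinner xi eta = (\<Sum>\<^sub>\<infinity>\<alpha>. cmat_inner (xi \<alpha>) (eta \<alpha>))"

definition msq :: "(int, 'N::finite) vec \<Rightarrow> real" where
  "msq \<alpha> = (\<Sum>k\<in>UNIV. (real_of_int (\<alpha> $ k))\<^sup>2)"

text \<open>Commutation phase: u^alpha u^beta = twist theta alpha beta * u^(alpha+beta).\<close>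
definition twist :: "((real, 'N::idx) vec, 'N) vec \<Rightarrow> (int, 'N) vec \<Rightarrow> (int, 'N) vec \<Rightarrow> complex"
  where "twist \<theta> \<alpha> \<beta> =
    exp (2 * pi * \<i> * complex_of_real
      (\<Sum>k\<in>UNIV. \<Sum>l\<in>UNIV.
          if l < k then \<theta> $ k $ l * real_of_int (\<alpha> $ k) * real_of_int (\<beta> $ l) else 0))"

text \<open>Elements of M_n(A_theta^infty): rapidly decreasing coefficient functions.\<close>
definition smooth_elt :: "('N::finite, 'n::finite) coeff \<Rightarrow> bool" where
  "smooth_elt a \<longleftrightarrow> (\<forall>p::nat. \<exists>C. \<forall>\<alpha>. (1 + msq \<alpha>) ^ p * norm (a \<alpha>) \<le> C)"

text \<open>Involution of M_n(A_theta): (m u^beta)^* = m^* (u^beta)^*,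
 (u^beta)^* = cnj(twist (-beta) beta) u^(-beta).\<close>
definition nc_star :: "((real, 'N::idx) vec, 'N) vec \<Rightarrow> ('N, 'n::finite) coeff \<Rightarrow> ('N, 'n) coeff" where
  "nc_star \<theta> a = (\<lambda>\<gamma>. cmat_scale (cnj (twist \<theta> \<gamma> (- \<gamma>))) (cmat_adj (a (- \<gamma>))))"

text \<open>Left multiplication pi(a) (twisted convolution).\<close>
definition piop :: "((real, 'N::idx) vec, 'N) vec \<Rightarrow> ('N, 'n::finite) coeff \<Rightarrow> ('N, 'n) coeff \<Rightarrow> ('N, 'n) coeff" where
  "piop \<theta> a xi = (\<lambda>\<alpha>. \<Sum>\<^sub>\<infinity>\<beta>. cmat_scale (twist \<theta> \<beta> (\<alpha> - \<beta>)) (a \<beta> ** xi (\<alpha> - \<beta>)))"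

definition Dop :: "'N \<Rightarrow> ('N::finite, 'n::finite) coeff \<Rightarrow> ('N, 'n) coeff" where
  "Dop k xi = (\<lambda>\<alpha>. cmat_scale (\<i> * of_int (\<alpha> $ k)) (xi \<alpha>))"

definition nabla :: "((real, 'N::idx) vec, 'N) vec \<Rightarrow> ('N \<Rightarrow> ('N, 'n::finite) coeff) \<Rightarrow> 'N \<Rightarrow> ('N, 'n) coeff \<Rightarrow> ('N, 'n) coeff" where
  "nabla \<theta> h k xi = (\<lambda>\<alpha>. Dop k xi \<alpha> + piop \<theta> (h k) xi \<alpha>)"

definition Hop :: "((real, 'N::idx) vec, 'N) vec \<Rightarrow> ('N \<Rightarrow> ('N, 'n::finite) coeff) \<Rightarrow> ('N, 'n) coeff \<Rightarrow> ('N, 'n) coeff" where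
  "Hop \<theta> h xi = (\<lambda>\<alpha>. - (\<Sum>k\<in>UNIV. nabla \<theta> h k (nabla \<theta> h k xi) \<alpha>))"

definition dom_Delta :: "('N::finite, 'n::finite) coeff set" where
  "dom_Delta = {xi \<in> L2. (\<lambda>\<alpha>. cmat_scale (complex_of_real (msq \<alpha>)) (xi \<alpha>)) \<in> L2}"

text \<open>Self-adjointness of an (unbounded) operator T with domain D in L2:
densely defined, and T equals its Hilbert-space adjoint T^* (same domain, same action).\<close>
definition self_adjoint_op :: "(('N::finite, 'n::finite) coeff \<Rightarrow> ('N, 'n) coeff) \<Rightarrow> ('N, 'n) coeff set \<Rightarrow> bool" where
  "self_adjoint_op T D \<longleftrightarrow>
     D \<subseteq> L2 \<and> T ` D \<subseteq> L2 \<and>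
     (\<forall>xi\<in>L2. \<forall>e>0. \<exists>psi\<in>D. (\<Sum>\<^sub>\<infinity>\<alpha>. (norm (xi \<alpha> - psi \<alpha>))\<^sup>2) < e) \<and>
     (\<forall>eta\<in>L2. eta \<in> D \<longleftrightarrow> (\<exists>zeta\<in>L2. \<forall>xi\<in>D. hinner (T xi) eta = hinner xi zeta)) \<and>
     (\<forall>xi\<in>D. \<forall>eta\<in>D. hinner (T xi) eta = hinner xi (T eta))"

end

theory Submission
  imports Defs
begin

text \<open>Regularity is measured by the
weighted spaces \<open>W\<^sup>s\<close> of those \<open>\<xi>\<close> with \<open>\<langle>\<alpha>\<rangle>\<^sup>s \<xi>(\<alpha>)\<close> square summable, \<open>\<langle>\<alpha>\<rangle> = 1 + |\<alpha>|\<^sub>1\<close>.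
Peetre's inequality \<open>\<langle>\<alpha>\<rangle>\<^sup>s \<le> \<langle>\<beta>\<rangle>\<^bsup>|s|\<^esup> \<langle>\<alpha> - \<beta>\<rangle>\<^sup>s\<close> and Young's inequality \<open>l\<^sup>1 * l\<^sup>2 \<subseteq> l\<^sup>2\<close>
make \<open>\<pi>(a)\<close> bounded on every \<open>W\<^sup>s\<close>, so \<open>\<nabla>\<^sub>k\<close> maps \<open>W\<^bsup>s+1\<^esup>\<close> to \<open>W\<^sup>s\<close>, and \<open>\<nabla>\<^sub>k\<close> is skew for
the pairing of \<open>W\<^bsup>s+1\<^esup>\<close> with \<open>W\<^bsup>-s\<^esup>\<close> because \<open>D\<^sub>k\<close> is and \<open>h\<^sub>k\<^sup>* = -h\<^sub>k\<close>. Hence \<open>H\<close> maps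
\<open>W\<^bsup>s+2\<^esup>\<close> to \<open>W\<^sup>s\<close> and is symmetric on \<open>W\<^sup>2\<close>, which is \<open>\<D>(\<Delta>)\<close>. Since \<open>H - \<Delta>\<close> is of first
order, \<open>\<eta> \<in> W\<^sup>s\<close> and \<open>H\<eta> \<in> W\<^bsup>s-1\<^esup>\<close> imply \<open>\<eta> \<in> W\<^bsup>s+1\<^esup>\<close>. A vector \<open>\<eta>\<close> in the domain of
the adjoint of \<open>H\<close> satisfies \<open>H\<eta> \<in> L\<^sup>2\<close> (test against finitely supported vectors), and two such
regularity steps put it into \<open>W\<^sup>2\<close>.\<close>

section \<open>Matrices and phases\<close>

lemma power2_norm_vec: "(norm (x :: 'a::real_normed_vector ^ 'n))\<^sup>2 = (\<Sum>i\<in>UNIV. (norm (x $ i))\<^sup>2)"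
  unfolding norm_vec_def L2_set_def by (simp add: sum_nonneg)

lemma power2_norm_matrix:
  "(norm (A :: complex ^ 'n ^ 'm))\<^sup>2 = (\<Sum>i\<in>UNIV. \<Sum>j\<in>UNIV. (cmod (A $ i $ j))\<^sup>2)"
  by (simp add: power2_norm_vec)

lemma norm_matrix_mult_le: "norm ((A :: complex ^ 'k ^ 'm) ** (B :: complex ^ 'n ^ 'k)) \<le> norm A * norm B"
proof -
  define c where "c j = L2_set (\<lambda>k. cmod (B $ k $ j)) UNIV" for j
  have entry: "cmod ((A ** B) $ i $ j) \<le> norm (A $ i) * c j" for i j
  proof -
    have "cmod ((A ** B) $ i $ j) = cmod (\<Sum>k\<in>UNIV. A $ i $ k * B $ k $ j)"
      by (simp add: matrix_matrix_mult_def)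
    also have "\<dots> \<le> (\<Sum>k\<in>UNIV. \<bar>cmod (A $ i $ k)\<bar> * \<bar>cmod (B $ k $ j)\<bar>)"
      by (rule order_trans[OF norm_sum]) (simp add: norm_mult)
    also have "\<dots> \<le> norm (A $ i) * c j"
      unfolding c_def norm_vec_def by (rule L2_set_mult_ineq)
    finally show ?thesis .
  qed
  have "(norm (A ** B))\<^sup>2 \<le> (\<Sum>i\<in>UNIV. \<Sum>j\<in>UNIV. (norm (A $ i))\<^sup>2 * (c j)\<^sup>2)"
    unfolding power2_norm_matrix
    by (intro sum_mono) (metis entry norm_ge_zero power_mono power_mult_distrib)
  also have "\<dots> = (\<Sum>i\<in>UNIV. (norm (A $ i))\<^sup>2) * (\<Sum>j\<in>UNIV. (c j)\<^sup>2)"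
    by (simp add: sum_product)
  also have "(\<Sum>j\<in>UNIV. (c j)\<^sup>2) = (\<Sum>j\<in>UNIV. \<Sum>k\<in>UNIV. (cmod (B $ k $ j))\<^sup>2)"
    unfolding c_def L2_set_def by (simp add: sum_nonneg)
  also have "\<dots> = (norm B)\<^sup>2"
    unfolding power2_norm_matrix by (rule sum.swap)
  finally have "(norm (A ** B))\<^sup>2 \<le> (norm A * norm B)\<^sup>2"
    by (simp add: power2_norm_vec[of A, symmetric] power_mult_distrib)
  then show ?thesis
    by (meson mult_nonneg_nonneg norm_ge_zero power2_le_imp_le)
qed

lemma norm_cmat_inner_le: "cmod (cmat_inner A B) \<le> norm A * norm B"
proof -
  have "cmod (cmat_inner A B) \<le> (\<Sum>i\<in>UNIV. \<Sum>j\<in>UNIV. \<bar>cmod (A $ i $ j)\<bar> * \<bar>cmod (B $ i $ j)\<bar>)"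
    unfolding cmat_inner_def
    by (rule order_trans[OF norm_sum], rule sum_mono, rule order_trans[OF norm_sum])
       (simp add: norm_mult)
  also have "\<dots> \<le> (\<Sum>i\<in>UNIV. \<bar>norm (A $ i)\<bar> * \<bar>norm (B $ i)\<bar>)"
  proof (rule sum_mono)
    fix i
    show "(\<Sum>j\<in>UNIV. \<bar>cmod (A $ i $ j)\<bar> * \<bar>cmod (B $ i $ j)\<bar>) \<le> \<bar>norm (A $ i)\<bar> * \<bar>norm (B $ i)\<bar>"
      using L2_set_mult_ineq[of "\<lambda>j. cmod (A $ i $ j)" "\<lambda>j. cmod (B $ i $ j)" UNIV]
      by (simp add: norm_vec_def)
  qed
  also have "\<dots> \<le> norm A * norm B"
    unfolding norm_vec_def[of A] norm_vec_def[of B] by (rule L2_set_mult_ineq)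
  finally show ?thesis .
qed

lemma norm_cmat_scale: "norm (cmat_scale c A) = cmod c * norm A"
proof -
  have "(norm (cmat_scale c A))\<^sup>2 = (cmod c * norm A)\<^sup>2"
    unfolding power2_norm_matrix power_mult_distrib
    by (simp add: cmat_scale_def norm_mult power_mult_distrib sum_distrib_left)
  then show ?thesis
    by (meson mult_nonneg_nonneg norm_ge_zero power2_eq_iff_nonneg)
qed

lemma cmat_inner_add_left: "cmat_inner (A + B) C = cmat_inner A C + cmat_inner B C"
  by (simp add: cmat_inner_def algebra_simps sum.distrib)

lemma cmat_inner_add_right: "cmat_inner A (B + C) = cmat_inner A B + cmat_inner A C"
  by (simp add: cmat_inner_def algebra_simps sum.distrib)

lemma cmat_inner_minus_left: "cmat_inner (- A) C = - cmat_inner A C"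
  by (simp add: cmat_inner_def sum_negf)

lemma cmat_inner_minus_right: "cmat_inner A (- C) = - cmat_inner A C"
  by (simp add: cmat_inner_def sum_negf)

lemma cmat_inner_scale_left: "cmat_inner (cmat_scale c A) B = cnj c * cmat_inner A B"
  by (simp add: cmat_inner_def cmat_scale_def sum_distrib_left mult.assoc)

lemma cmat_inner_scale_right: "cmat_inner A (cmat_scale c B) = c * cmat_inner A B"
  by (simp add: cmat_inner_def cmat_scale_def sum_distrib_left algebra_simps)

lemma cmat_inner_commute_cnj: "cmat_inner A B = cnj (cmat_inner B A)"
  by (simp add: cmat_inner_def mult.commute)

lemma cmat_inner_mult_left:
  "cmat_inner ((A :: complex ^ 'n ^ 'n) ** (B :: complex ^ 'n ^ 'n)) C = cmat_inner B (cmat_adj A ** C)"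
proof -
  have "cmat_inner (A ** B) C = (\<Sum>i\<in>UNIV. \<Sum>j\<in>UNIV. \<Sum>k\<in>UNIV. cnj (A $ i $ k) * cnj (B $ k $ j) * C $ i $ j)"
    by (simp add: cmat_inner_def matrix_matrix_mult_def sum_distrib_right)
  also have "\<dots> = (\<Sum>i\<in>UNIV. \<Sum>k\<in>UNIV. \<Sum>j\<in>UNIV. cnj (A $ i $ k) * cnj (B $ k $ j) * C $ i $ j)"
    by (rule sum.cong[OF refl], rule sum.swap)
  also have "\<dots> = (\<Sum>k\<in>UNIV. \<Sum>i\<in>UNIV. \<Sum>j\<in>UNIV. cnj (A $ i $ k) * cnj (B $ k $ j) * C $ i $ j)"
    by (rule sum.swap)
  also have "\<dots> = (\<Sum>k\<in>UNIV. \<Sum>j\<in>UNIV. \<Sum>i\<in>UNIV. cnj (A $ i $ k) * cnj (B $ k $ j) * C $ i $ j)"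
    by (rule sum.cong[OF refl], rule sum.swap)
  also have "\<dots> = cmat_inner B (cmat_adj A ** C)"
    by (simp add: cmat_inner_def matrix_matrix_mult_def cmat_adj_def sum_distrib_left algebra_simps)
  finally show ?thesis .
qed

lemma bounded_linear_cmat_inner_right: "bounded_linear (\<lambda>B. cmat_inner A B)"
proof (rule bounded_linear_intro[where K = "norm A"])
  show "cmat_inner A (B + C) = cmat_inner A B + cmat_inner A C" for B C
    by (rule cmat_inner_add_right)
  show "cmat_inner A (r *\<^sub>R B) = r *\<^sub>R cmat_inner A B" for r B
    by (simp add: cmat_inner_def scaleR_sum_right)
  show "norm (cmat_inner A B) \<le> norm B * norm A" for B
    using norm_cmat_inner_le[of A B] by (simp add: mult.commute)
qed

lemma cmat_inner_infsum_right:
  assumes "f summable_on S"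
  shows "cmat_inner B (infsum f S) = (\<Sum>\<^sub>\<infinity>x\<in>S. cmat_inner B (f x))"
  using has_sum_bounded_linear[OF bounded_linear_cmat_inner_right has_sum_infsum[OF assms], of B]
  by (simp add: infsumI)

lemma cmat_inner_infsum_left:
  assumes "f summable_on S"
  shows "cmat_inner (infsum f S) B = (\<Sum>\<^sub>\<infinity>x\<in>S. cmat_inner (f x) B)"
  by (simp add: cmat_inner_commute_cnj[of _ B] cmat_inner_infsum_right[OF assms])

lemma cmat_scale_mult_left: "cmat_scale c A ** B = cmat_scale c (A ** B)"
  by (simp add: cmat_scale_def matrix_matrix_mult_def vec_eq_iff sum_distrib_left mult.assoc)

lemma cmat_scale_scale: "cmat_scale c (cmat_scale d A) = cmat_scale (c * d) A"
  by (simp add: cmat_scale_def vec_eq_iff mult.assoc)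

lemma cmat_scale_one [simp]: "cmat_scale 1 A = A"
  by (simp add: cmat_scale_def vec_eq_iff)

lemma cmat_scale_minus: "cmat_scale (- c) A = - cmat_scale c A"
  by (simp add: cmat_scale_def vec_eq_iff)

lemma cmat_scale_uminus: "cmat_scale c (- A) = - cmat_scale c A"
  by (simp add: cmat_scale_def vec_eq_iff)

lemma cmat_scale_add: "cmat_scale c (A + B) = cmat_scale c A + cmat_scale c B"
  by (simp add: cmat_scale_def vec_eq_iff algebra_simps)

lemma cmat_scale_add_left: "cmat_scale (c + d) A = cmat_scale c A + cmat_scale d A"
  by (simp add: cmat_scale_def vec_eq_iff algebra_simps)

lemma cmat_scale_sum_left: "cmat_scale (\<Sum>k\<in>S. c k) A = (\<Sum>k\<in>S. cmat_scale (c k) A)"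
  by (simp add: cmat_scale_def vec_eq_iff sum_distrib_right)

lemma matrix_mult_uminus_left: "(- (A :: complex ^ 'n ^ 'n)) ** B = - (A ** B)"
  by (simp add: matrix_matrix_mult_def vec_eq_iff sum_negf)

definition cis2pi :: "real \<Rightarrow> complex" where
  "cis2pi x = exp (2 * pi * \<i> * complex_of_real x)"

definition twist_form :: "((real, 'N::idx) vec, 'N) vec \<Rightarrow> (int, 'N) vec \<Rightarrow> (int, 'N) vec \<Rightarrow> real" where
  "twist_form \<theta> a b =
     (\<Sum>k\<in>UNIV. \<Sum>l\<in>UNIV. (if l < k then \<theta> $ k $ l else 0) * real_of_int (a $ k) * real_of_int (b $ l))"

lemma twist_eq_cis2pi: "twist \<theta> a b = cis2pi (twist_form \<theta> a b)"
proof -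
  have "(\<Sum>k\<in>UNIV. \<Sum>l\<in>UNIV. if l < k then \<theta> $ k $ l * real_of_int (a $ k) * real_of_int (b $ l) else 0)
      = twist_form \<theta> a b"
    unfolding twist_form_def by (intro sum.cong refl) simp
  then show ?thesis unfolding twist_def cis2pi_def by simp
qed

lemma cis2pi_add: "cis2pi (x + y) = cis2pi x * cis2pi y"
  unfolding cis2pi_def by (simp add: distrib_left exp_add)

lemma cnj_cis2pi: "cnj (cis2pi x) = cis2pi (- x)"
  unfolding cis2pi_def by (simp add: exp_cnj)

lemma norm_cis2pi [simp]: "norm (cis2pi x) = 1"
  unfolding cis2pi_def by (simp add: norm_exp_eq_Re)

lemma cis2pi_mult_cnj: "cis2pi x * cnj (cis2pi x) = 1"
  by (simp only: cnj_cis2pi cis2pi_add[symmetric]) (simp add: cis2pi_def)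

lemma norm_twist [simp]: "norm (twist \<theta> a b) = 1"
  by (simp add: twist_eq_cis2pi)

lemma twist_form_minus_left: "twist_form \<theta> (- a) b = - twist_form \<theta> a b"
  unfolding twist_form_def by (simp add: sum_negf)

lemma twist_form_minus_right: "twist_form \<theta> a (- b) = - twist_form \<theta> a b"
  unfolding twist_form_def by (simp add: sum_negf)

lemma twist_form_diff_right: "twist_form \<theta> a (b - c) = twist_form \<theta> a b - twist_form \<theta> a c"
  unfolding twist_form_def by (simp add: algebra_simps sum_subtractf)

lemma twist_cocycle: "cnj (twist \<theta> (- b) y) * twist \<theta> b (- b) = twist \<theta> b (y - b)"
proof -
  have "- twist_form \<theta> (- b) y + twist_form \<theta> b (- b) = twist_form \<theta> b (y - b)"
    by (simp add: twist_form_minus_left twist_form_minus_right twist_form_diff_right)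
  then show ?thesis
    by (simp add: twist_eq_cis2pi cnj_cis2pi cis2pi_add[symmetric])
qed

section \<open>Weighted \<open>l\<^sup>2\<close> spaces\<close>

definition weight :: "(int, 'N::finite) vec \<Rightarrow> real" where
  "weight a = 1 + (\<Sum>k\<in>UNIV. \<bar>real_of_int (a $ k)\<bar>)"

lemma weight_ge_1: "1 \<le> weight a"
  unfolding weight_def by (simp add: sum_nonneg)

lemma weight_pos: "0 < weight a"
  using weight_ge_1[of a] by linarith

lemma weight_nonzero [simp]: "weight a \<noteq> 0"
  using weight_pos[of a] by linarith

lemma weight_uminus [simp]: "weight (- a) = weight a"
  unfolding weight_def by simp

lemma weight_add_le: "weight (a + b) \<le> weight a * weight b"
proof -
  let ?A = "\<Sum>k\<in>UNIV. \<bar>real_of_int (a $ k)\<bar>" and ?B = "\<Sum>k\<in>UNIV. \<bar>real_of_int (b $ k)\<bar>"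
  have "(\<Sum>k\<in>UNIV. \<bar>real_of_int ((a + b) $ k)\<bar>) \<le> (\<Sum>k\<in>UNIV. \<bar>real_of_int (a $ k)\<bar> + \<bar>real_of_int (b $ k)\<bar>)"
    by (intro sum_mono) simp
  also have "\<dots> = ?A + ?B" by (simp add: sum.distrib)
  finally have "(\<Sum>k\<in>UNIV. \<bar>real_of_int ((a + b) $ k)\<bar>) \<le> ?A + ?B" .
  moreover have "0 \<le> ?A * ?B" by (simp add: sum_nonneg)
  moreover have "(1 + ?A) * (1 + ?B) = 1 + ?A + ?B + ?A * ?B" by (simp add: algebra_simps)
  ultimately show ?thesis unfolding weight_def by linarith
qed

lemma weight_diff_le: "weight (a - b) \<le> weight a * weight b"
  using weight_add_le[of a "- b"] by simp

lemma abs_component_le_weight: "\<bar>real_of_int (a $ k)\<bar> \<le> weight a"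
proof -
  have "\<bar>real_of_int (a $ k)\<bar> \<le> (\<Sum>k\<in>UNIV. \<bar>real_of_int (a $ k)\<bar>)"
    by (rule member_le_sum) auto
  then show ?thesis unfolding weight_def by simp
qed

lemma msq_nonneg: "0 \<le> msq a"
  unfolding msq_def by (simp add: sum_nonneg)

lemma sum_power2_le_power2_sum:
  assumes "\<And>i. 0 \<le> f i"
  shows "(\<Sum>i\<in>S. (f i)\<^sup>2) \<le> (\<Sum>i\<in>S. f i :: real)\<^sup>2"
proof (induction S rule: infinite_finite_induct)
  case (insert x F)
  have "0 \<le> 2 * f x * sum f F" using assms by (simp add: sum_nonneg)
  with insert show ?case by (simp add: power2_sum)
qed auto

lemma msq_le_power2_weight: "msq a \<le> (weight a)\<^sup>2"
proof -
  have "msq a = (\<Sum>k\<in>UNIV. \<bar>real_of_int (a $ k)\<bar>\<^sup>2)" unfolding msq_def by simp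
  also have "\<dots> \<le> (\<Sum>k\<in>UNIV. \<bar>real_of_int (a $ k)\<bar>)\<^sup>2"
    by (rule sum_power2_le_power2_sum) simp
  also have "\<dots> \<le> (weight a)\<^sup>2"
    unfolding weight_def by (rule power_mono) (auto simp: sum_nonneg)
  finally show ?thesis .
qed

lemma power2_weight_le_msq:
  "(weight (a :: (int, 'N::finite) vec))\<^sup>2 \<le> (2 * (real CARD('N) + 1)) * (1 + msq a)"
proof -
  let ?S = "\<Sum>k\<in>(UNIV::'N set). \<bar>real_of_int (a $ k)\<bar>"
  have "?S = (\<Sum>k\<in>UNIV. \<bar>\<bar>real_of_int (a $ k)\<bar>\<bar> * \<bar>1\<bar>)" by simp
  also have "\<dots> \<le> L2_set (\<lambda>k. \<bar>real_of_int (a $ k)\<bar>) UNIV * L2_set (\<lambda>k. 1) (UNIV::'N set)"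
    by (rule L2_set_mult_ineq)
  finally have "?S\<^sup>2 \<le> (L2_set (\<lambda>k. \<bar>real_of_int (a $ k)\<bar>) UNIV * L2_set (\<lambda>k. 1) (UNIV::'N set))\<^sup>2"
    by (rule power_mono) (simp add: sum_nonneg)
  also have "\<dots> = msq a * real CARD('N)"
    unfolding L2_set_def msq_def power_mult_distrib by (simp add: sum_nonneg)
  finally have S: "?S\<^sup>2 \<le> msq a * real CARD('N)" .
  have "(weight a)\<^sup>2 = (1 + ?S)\<^sup>2" unfolding weight_def by simp
  also have "\<dots> \<le> 2 * (1 + ?S\<^sup>2)"
    using zero_le_power2[of "?S - 1"] by (simp add: power2_sum power2_diff)
  also have "\<dots> \<le> (2 * (real CARD('N) + 1)) * (1 + msq a)"
    using S msq_nonneg[of a] by (simp add: algebra_simps)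
  finally show ?thesis .
qed

lemma weight_powr_pos: "0 < weight a powr s"
  using weight_pos by simp

lemma weight_powr_mult_minus: "weight a powr s * weight a powr (- s) = 1"
  using weight_pos[of a] by (simp add: powr_add[symmetric])

lemma weight_powr_mono: "s \<le> t \<Longrightarrow> weight a powr s \<le> weight a powr t"
  using weight_ge_1[of a] by (simp add: powr_mono)

lemma weight_powr_peetre: "weight a powr s \<le> weight b powr \<bar>s\<bar> * weight (a - b) powr s"
proof (cases "s \<ge> 0")
  case True
  have "weight a = weight (b + (a - b))" by simp
  also have "\<dots> \<le> weight b * weight (a - b)" by (rule weight_add_le)
  finally have "weight a powr s \<le> (weight b * weight (a - b)) powr s"
    using weight_pos[of a] True by (intro powr_mono2) auto
  also have "\<dots> = weight b powr \<bar>s\<bar> * weight (a - b) powr s"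
    using True weight_pos[of b] weight_pos[of "a - b"] by (simp add: powr_mult)
  finally show ?thesis .
next
  case False
  let ?t = "- s"
  have "weight (a - b) powr ?t \<le> (weight a * weight b) powr ?t"
    using weight_pos[of "a - b"] False by (intro powr_mono2 weight_diff_le) auto
  also have "\<dots> = weight a powr ?t * weight b powr ?t"
    using weight_pos[of a] weight_pos[of b] by (simp add: powr_mult)
  finally have le: "weight (a - b) powr ?t \<le> weight a powr ?t * weight b powr ?t" .
  have "weight a powr s = 1 / weight a powr ?t"
    using weight_pos[of a] by (simp add: powr_minus divide_inverse)
  also have "\<dots> \<le> weight b powr ?t / weight (a - b) powr ?t"
    using le weight_powr_pos by (simp add: divide_simps mult.commute)
  also have "\<dots> = weight b powr \<bar>s\<bar> * weight (a - b) powr s"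
    using False weight_pos[of "a - b"] by (simp add: powr_minus divide_inverse)
  finally show ?thesis .
qed

definition sobolev :: "real \<Rightarrow> ('N::finite, 'n::finite) coeff set" where
  "sobolev s = {xi. (\<lambda>\<alpha>. (weight \<alpha> powr s * norm (xi \<alpha>))\<^sup>2) summable_on UNIV}"

lemma sobolev_0: "sobolev 0 = L2"
  unfolding sobolev_def L2_def by simp

lemma sobolev_dominated:
  fixes phi xi :: "('N::finite, 'n::finite) coeff"
  assumes xi: "xi \<in> sobolev t"
    and le: "\<And>\<alpha>. weight \<alpha> powr s * norm (phi \<alpha>) \<le> C * (weight \<alpha> powr t * norm (xi \<alpha>))"
  shows "phi \<in> sobolev s"
proof -
  have "(\<lambda>\<alpha>. C\<^sup>2 * (weight \<alpha> powr t * norm (xi \<alpha>))\<^sup>2) summable_on UNIV"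
    using xi unfolding sobolev_def by (simp add: summable_on_cmult_right)
  moreover have "(weight \<alpha> powr s * norm (phi \<alpha>))\<^sup>2 \<le> C\<^sup>2 * (weight \<alpha> powr t * norm (xi \<alpha>))\<^sup>2" for \<alpha>
    using power_mono[OF le[of \<alpha>], of 2] by (simp add: power_mult_distrib)
  ultimately show ?thesis
    unfolding sobolev_def by (auto elim: summable_on_comparison_test)
qed

lemma sobolev_antimono: "s \<le> t \<Longrightarrow> xi \<in> sobolev t \<Longrightarrow> xi \<in> sobolev s"
  by (rule sobolev_dominated[where C=1 and t=t]) (auto intro!: mult_right_mono weight_powr_mono)

lemma sobolev_add:
  fixes phi psi :: "('N::finite, 'n::finite) coeff"
  assumes "phi \<in> sobolev s" "psi \<in> sobolev s"
  shows "(\<lambda>\<alpha>. phi \<alpha> + psi \<alpha>) \<in> sobolev s"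
proof -
  let ?w = "\<lambda>\<alpha>. weight \<alpha> powr s"
  have "(\<lambda>\<alpha>. 2 * (?w \<alpha> * norm (phi \<alpha>))\<^sup>2 + 2 * (?w \<alpha> * norm (psi \<alpha>))\<^sup>2) summable_on UNIV"
    using assms unfolding sobolev_def by (intro summable_on_add summable_on_cmult_right) auto
  moreover have "(?w \<alpha> * norm (phi \<alpha> + psi \<alpha>))\<^sup>2 \<le> 2 * (?w \<alpha> * norm (phi \<alpha>))\<^sup>2 + 2 * (?w \<alpha> * norm (psi \<alpha>))\<^sup>2"
    for \<alpha>
  proof -
    have "?w \<alpha> * norm (phi \<alpha> + psi \<alpha>) \<le> ?w \<alpha> * norm (phi \<alpha>) + ?w \<alpha> * norm (psi \<alpha>)"
      by (metis distrib_left mult_left_mono norm_triangle_ineq weight_powr_pos less_imp_le)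
    then have "(?w \<alpha> * norm (phi \<alpha> + psi \<alpha>))\<^sup>2 \<le> (?w \<alpha> * norm (phi \<alpha>) + ?w \<alpha> * norm (psi \<alpha>))\<^sup>2"
      by (intro power_mono) auto
    also have "\<dots> \<le> 2 * (?w \<alpha> * norm (phi \<alpha>))\<^sup>2 + 2 * (?w \<alpha> * norm (psi \<alpha>))\<^sup>2"
      using zero_le_power2[of "?w \<alpha> * norm (phi \<alpha>) - ?w \<alpha> * norm (psi \<alpha>)"]
      by (simp add: power2_sum power2_diff)
    finally show ?thesis .
  qed
  ultimately show ?thesis
    unfolding sobolev_def by (auto elim: summable_on_comparison_test)
qed

lemma sobolev_uminus: "phi \<in> sobolev s \<Longrightarrow> (\<lambda>\<alpha>. - phi \<alpha>) \<in> sobolev s"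
  by (rule sobolev_dominated[where C=1 and t=s]) auto

lemma sobolev_finite_support:
  assumes "finite F" "\<And>\<alpha>. \<alpha> \<notin> F \<Longrightarrow> xi \<alpha> = 0"
  shows "xi \<in> sobolev s"
proof -
  have "(\<lambda>\<alpha>. (weight \<alpha> powr s * norm (xi \<alpha>))\<^sup>2) summable_on F"
    using assms(1) by simp
  moreover have "((\<lambda>\<alpha>. (weight \<alpha> powr s * norm (xi \<alpha>))\<^sup>2) summable_on F)
      \<longleftrightarrow> ((\<lambda>\<alpha>. (weight \<alpha> powr s * norm (xi \<alpha>))\<^sup>2) summable_on UNIV)"
    by (rule summable_on_cong_neutral) (use assms in auto)
  ultimately show ?thesis unfolding sobolev_def by simp
qed

lemma sobolev_sum:
  assumes "\<And>k. k \<in> S \<Longrightarrow> f k \<in> sobolev s"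
  shows "(\<lambda>\<alpha>. \<Sum>k\<in>S. f k \<alpha>) \<in> sobolev s"
  using assms
  by (induction S rule: infinite_finite_induct)
     (simp_all add: sobolev_add sobolev_finite_support[of "{}"])

section \<open>Rapid decay\<close>

definition inv_sq_weight :: "int \<Rightarrow> real" where
  "inv_sq_weight j = 1 / (1 + \<bar>real_of_int j\<bar>)\<^sup>2"

lemma inv_sq_weight_nonneg: "0 \<le> inv_sq_weight j"
  unfolding inv_sq_weight_def by simp

lemma inv_sq_weight_summable: "inv_sq_weight summable_on UNIV"
proof -
  have s: "(\<lambda>n::nat. 1 / (1 + real n)\<^sup>2) summable_on UNIV"
    by (rule summable_nonneg_imp_summable_on) (use inverse_squares_sums sums_summable in auto)
  have "inv_sq_weight summable_on (range int)"
    by (subst summable_on_reindex) (auto simp: o_def inv_sq_weight_def add.commute intro: s)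
  moreover have "inv_sq_weight summable_on (range (\<lambda>n. - int n))"
    by (subst summable_on_reindex) (auto simp: inj_on_def o_def inv_sq_weight_def add.commute intro: s)
  ultimately have "inv_sq_weight summable_on (range int \<union> range (\<lambda>n. - int n))"
    by (rule summable_on_union)
  also have "range int \<union> range (\<lambda>n. - int n) = UNIV"
  proof -
    have "x \<in> range int \<union> range (\<lambda>n. - int n)" for x
    proof (cases "x \<ge> 0")
      case True then show ?thesis by (metis UnI1 nonneg_int_cases rangeI)
    next
      case False then have "x = - int (nat (- x))" by simp
      then show ?thesis by blast
    qed
    then show ?thesis by blast
  qed
  finally show ?thesis .
qed

definition inv_sq_weight_prod :: "(int, 'N::finite) vec \<Rightarrow> real" where
  "inv_sq_weight_prod \<alpha> = (\<Prod>k\<in>UNIV. inv_sq_weight (\<alpha> $ k))"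

lemma inv_sq_weight_prod_summable: "(inv_sq_weight_prod :: (int, 'N::finite) vec \<Rightarrow> real) summable_on UNIV"
proof (rule nonneg_bdd_above_summable_on)
  show "0 \<le> inv_sq_weight_prod x" for x :: "(int, 'N) vec"
    unfolding inv_sq_weight_prod_def by (simp add: prod_nonneg inv_sq_weight_nonneg)
  define M where "M = (\<Prod>k\<in>(UNIV::'N set). infsum inv_sq_weight UNIV)"
  have "sum inv_sq_weight_prod F \<le> M" if fin: "finite F" for F :: "(int, 'N) vec set"
  proof -
    define P where "P k = (\<lambda>\<alpha>. \<alpha> $ k) ` F" for k
    have finP: "finite (P k)" for k unfolding P_def using fin by simp
    define Box where "Box = vec_lambda ` (PiE UNIV P)"
    have "F \<subseteq> Box"
    proof
      fix \<alpha> assume "\<alpha> \<in> F"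
      then have "vec_nth \<alpha> \<in> PiE UNIV P" unfolding P_def by auto
      then show "\<alpha> \<in> Box" unfolding Box_def by (metis image_eqI vec_nth_inverse)
    qed
    moreover have "finite Box" unfolding Box_def using finP by (simp add: finite_PiE)
    ultimately have "sum inv_sq_weight_prod F \<le> sum inv_sq_weight_prod Box"
      by (intro sum_mono2) (auto simp: inv_sq_weight_prod_def prod_nonneg inv_sq_weight_nonneg)
    also have "\<dots> = (\<Sum>f\<in>PiE UNIV P. \<Prod>k\<in>UNIV. inv_sq_weight (f k))"
      unfolding Box_def inv_sq_weight_prod_def
      by (subst sum.reindex) (auto simp: inj_on_def vec_eq_iff vec_lambda_inverse)
    also have "\<dots> = (\<Prod>k\<in>UNIV. \<Sum>j\<in>P k. inv_sq_weight j)"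
      by (rule prod_sum_PiE[symmetric]) (auto simp: finP)
    also have "\<dots> \<le> M"
      unfolding M_def
      by (intro prod_mono conjI sum_nonneg inv_sq_weight_nonneg finite_sum_le_infsum
            inv_sq_weight_summable finP) auto
    finally show ?thesis .
  qed
  then show "bdd_above (sum (inv_sq_weight_prod :: (int, 'N) vec \<Rightarrow> real) ` {F. F \<subseteq> UNIV \<and> finite F})"
    by (intro bdd_aboveI2[where M=M]) auto
qed

lemma weight_powr_le_inv_sq_weight_prod:
  "weight (\<alpha> :: (int, 'N::finite) vec) powr (- 2 * real CARD('N)) \<le> inv_sq_weight_prod \<alpha>"
proof -
  let ?P = "\<Prod>k\<in>(UNIV::'N set). 1 + \<bar>real_of_int (\<alpha> $ k)\<bar>"
  have "?P \<le> (\<Prod>k\<in>(UNIV::'N set). weight \<alpha>)"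
    using abs_component_le_weight[of \<alpha>]
    by (intro prod_mono conjI) (auto simp: weight_def intro: member_le_sum)
  then have le: "?P \<le> weight \<alpha> ^ CARD('N)" by simp
  have pos: "0 < ?P"
    by (intro prod_pos) (auto simp: add_pos_nonneg)
  have "- 2 * real CARD('N) = - real (CARD('N) * 2)" by simp
  then have "weight \<alpha> powr (- 2 * real CARD('N)) = inverse (weight \<alpha> ^ (CARD('N) * 2))"
    by (simp only: powr_minus powr_realpow[OF weight_pos])
  also have "\<dots> = 1 / (weight \<alpha> ^ CARD('N))\<^sup>2"
    unfolding power_mult by (simp add: divide_inverse)
  also have "\<dots> \<le> 1 / ?P\<^sup>2"
    using le pos by (intro divide_left_mono power_mono mult_pos_pos) auto
  also have "\<dots> = inv_sq_weight_prod \<alpha>"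
    unfolding inv_sq_weight_prod_def inv_sq_weight_def prod_dividef prod_power_distrib by simp
  finally show ?thesis .
qed

definition rapidly_decreasing :: "('N::finite, 'n::finite) coeff \<Rightarrow> bool" where
  "rapidly_decreasing a \<longleftrightarrow> (\<forall>r. (\<lambda>\<beta>. weight \<beta> powr r * norm (a \<beta>)) summable_on UNIV)"

lemma weight_powr_le_poly_msq:
  "weight (\<alpha> :: (int, 'N::finite) vec) powr (2 * real p) \<le> (2 * (real CARD('N) + 1)) ^ p * (1 + msq \<alpha>) ^ p"
proof -
  have "weight \<alpha> powr (2 * real p) = ((weight \<alpha>)\<^sup>2) ^ p"
    using powr_realpow[OF weight_pos, of \<alpha> "2 * p"] by (simp add: power_mult)
  also have "\<dots> \<le> (2 * (real CARD('N) + 1) * (1 + msq \<alpha>)) ^ p"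
    by (intro power_mono power2_weight_le_msq) simp
  finally show ?thesis by (simp add: power_mult_distrib)
qed

lemma smooth_elt_rapidly_decreasing:
  assumes "smooth_elt (a :: ('N::finite, 'n::finite) coeff)"
  shows "rapidly_decreasing a"
  unfolding rapidly_decreasing_def
proof
  fix r :: real
  let ?q = "2 * real CARD('N)" and ?K = "2 * (real CARD('N) + 1)"
  obtain p :: nat where "(r + ?q) / 2 \<le> real p"
    using real_arch_simple by blast
  then have p: "r + ?q \<le> 2 * real p" by simp
  obtain C where C: "\<And>\<alpha>. (1 + msq \<alpha>) ^ p * norm (a \<alpha>) \<le> C"
    using assms unfolding smooth_elt_def by blast
  have "weight \<alpha> powr r * norm (a \<alpha>) \<le> ?K ^ p * C * inv_sq_weight_prod \<alpha>" for \<alpha>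
  proof -
    have C0: "0 \<le> C" using C[of \<alpha>] msq_nonneg[of \<alpha>] by (smt (verit) norm_ge_zero zero_le_mult_iff zero_le_power)
    have "weight \<alpha> powr r \<le> weight \<alpha> powr (2 * real p + - ?q)"
      by (rule weight_powr_mono) (use p in linarith)
    also have "\<dots> = weight \<alpha> powr (2 * real p) * weight \<alpha> powr (- ?q)"
      by (rule powr_add)
    also have "\<dots> \<le> ?K ^ p * (1 + msq \<alpha>) ^ p * weight \<alpha> powr (- ?q)"
      by (intro mult_right_mono weight_powr_le_poly_msq) simp
    finally have "weight \<alpha> powr r * norm (a \<alpha>)
        \<le> ?K ^ p * (1 + msq \<alpha>) ^ p * weight \<alpha> powr (- ?q) * norm (a \<alpha>)"
      by (rule mult_right_mono) simp
    also have "\<dots> = ?K ^ p * ((1 + msq \<alpha>) ^ p * norm (a \<alpha>)) * weight \<alpha> powr (- ?q)"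
      by (simp add: algebra_simps)
    also have "\<dots> \<le> ?K ^ p * C * inv_sq_weight_prod \<alpha>"
      using C[of \<alpha>] C0 weight_powr_le_inv_sq_weight_prod[of \<alpha>]
      by (intro mult_mono mult_left_mono) auto
    finally show ?thesis .
  qed
  then show "(\<lambda>\<beta>. weight \<beta> powr r * norm (a \<beta>)) summable_on UNIV"
    by (intro summable_on_comparison_test[OF summable_on_cmult_right[OF inv_sq_weight_prod_summable]]) auto
qed

section \<open>Young's inequality\<close>

lemma has_sum_shift:
  fixes f :: "'a::ab_group_add \<Rightarrow> 'b::topological_comm_monoid_add"
  shows "((\<lambda>x. f (x - b)) has_sum S) UNIV \<longleftrightarrow> (f has_sum S) UNIV"
  by (rule has_sum_reindex_bij_witness[where j="\<lambda>x. x - b" and i="\<lambda>x. x + b"]) auto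

lemma single_le_infsum:
  fixes f :: "'a \<Rightarrow> real"
  assumes "f summable_on UNIV" "\<And>x. 0 \<le> f x"
  shows "f x \<le> infsum f UNIV"
  using finite_sum_le_infsum[OF assms(1), of "{x}"] assms(2) by simp

lemma bounded_if_power2_summable:
  fixes X :: "'a \<Rightarrow> real"
  assumes "(\<lambda>x. (X x)\<^sup>2) summable_on UNIV"
  shows "\<exists>M. \<forall>x. \<bar>X x\<bar> \<le> M"
proof -
  have "(X x)\<^sup>2 \<le> infsum (\<lambda>x. (X x)\<^sup>2) UNIV" for x
    by (rule single_le_infsum[OF assms]) simp
  then have "\<bar>X x\<bar> \<le> sqrt (infsum (\<lambda>x. (X x)\<^sup>2) UNIV)" for x
    by (simp add: real_le_rsqrt)
  then show ?thesis by blast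
qed

lemma convolution_summable:
  fixes A X :: "'a::ab_group_add \<Rightarrow> real"
  assumes A: "A summable_on UNIV" "\<And>b. 0 \<le> A b"
    and X: "(\<lambda>x. (X x)\<^sup>2) summable_on UNIV"
  shows "(\<lambda>b. A b * X (a - b)) summable_on UNIV"
    and "(\<lambda>b. A b * (X (a - b))\<^sup>2) summable_on UNIV"
proof -
  obtain M where M: "\<And>x. \<bar>X x\<bar> \<le> M" using bounded_if_power2_summable[OF X] by blast
  have "norm (A b * X (a - b)) \<le> M * A b" for b
    using mult_left_mono[OF M[of "a - b"] A(2)[of b]] A(2)[of b] by (simp add: abs_mult mult.commute)
  then have "(\<lambda>b. norm (A b * X (a - b))) summable_on UNIV"
    by (intro summable_on_comparison_test[OF summable_on_cmult_right[OF A(1)]]) auto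
  then show "(\<lambda>b. A b * X (a - b)) summable_on UNIV"
    by (rule summable_on_iff_abs_summable_on_real[THEN iffD2])
  have "(X x)\<^sup>2 \<le> M\<^sup>2" for x
    using power_mono[OF M[of x] abs_ge_zero, of 2] by simp
  then have "A b * (X (a - b))\<^sup>2 \<le> M\<^sup>2 * A b" for b
    using A(2)[of b] by (simp add: mult.commute mult_left_mono)
  then show "(\<lambda>b. A b * (X (a - b))\<^sup>2) summable_on UNIV"
    by (intro summable_on_comparison_test[OF summable_on_cmult_right[OF A(1)]]) (auto simp: A(2))
qed

lemma power2_le_mult_if_le_means:
  fixes a b c :: real
  assumes "0 \<le> a" "0 \<le> b" "0 \<le> c" and le: "\<And>t. t > 0 \<Longrightarrow> c \<le> (t * a + b / t) / 2"
  shows "c\<^sup>2 \<le> a * b"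
proof (cases "c = 0")
  case False
  then have c: "c > 0" using assms by simp
  show ?thesis
  proof (cases "a = 0")
    case True
    have "c \<le> (b / ((b + 1) / c)) / 2" using le[of "(b + 1) / c"] c True assms by simp
    also have "\<dots> = b * c / (2 * (b + 1))" using c by (simp add: field_simps)
    also have "\<dots> < c" using c assms(2) by (auto simp: field_simps intro!: add_nonneg_pos)
    finally show ?thesis by simp
  next
    case False
    then have a: "a > 0" using assms by simp
    have "c \<le> (c / a * a + b / (c / a)) / 2" using le[of "c / a"] a c by simp
    also have "\<dots> = (c + a * b / c) / 2" using a c by (simp add: field_simps)
    finally have "c \<le> a * b / c" by simp
    then show ?thesis using c by (simp add: field_simps power2_eq_square)
  qed
qed (use assms in simp)

text \<open>Weighted Cauchy--Schwarz, \<open>(\<Sum> A X)\<^sup>2 \<le> (\<Sum> A) (\<Sum> A X\<^sup>2)\<close>, from the AM--GM bound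
  \<open>X \<le> t/2 + X\<^sup>2/(2t)\<close> optimised over \<open>t > 0\<close>.\<close>
lemma convolution_power2_le:
  fixes A X :: "'a::ab_group_add \<Rightarrow> real"
  assumes A: "A summable_on UNIV" "\<And>b. 0 \<le> A b"
    and X: "(\<lambda>x. (X x)\<^sup>2) summable_on UNIV" "\<And>x. 0 \<le> X x"
  shows "(\<Sum>\<^sub>\<infinity>b. A b * X (a - b))\<^sup>2 \<le> infsum A UNIV * (\<Sum>\<^sub>\<infinity>b. A b * (X (a - b))\<^sup>2)"
proof (rule power2_le_mult_if_le_means)
  note s1 = convolution_summable(1)[OF A X(1)] and s2 = convolution_summable(2)[OF A X(1)]
  show "0 \<le> infsum A UNIV" "0 \<le> (\<Sum>\<^sub>\<infinity>b. A b * (X (a - b))\<^sup>2)" "0 \<le> (\<Sum>\<^sub>\<infinity>b. A b * X (a - b))"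
    by (intro infsum_nonneg; simp add: A(2) X(2))+
  fix t :: real assume t: "t > 0"
  have s3: "(\<lambda>b. t / 2 * A b + 1 / (2 * t) * (A b * (X (a - b))\<^sup>2)) summable_on UNIV"
    by (intro summable_on_add summable_on_cmult_right s2 A(1))
  have "A b * X (a - b) \<le> t / 2 * A b + 1 / (2 * t) * (A b * (X (a - b))\<^sup>2)" for b
  proof -
    have "X (a - b) \<le> t / 2 + 1 / (2 * t) * (X (a - b))\<^sup>2"
      using t sum_squares_ge_zero[of "t - X (a - b)" 0]
      by (simp add: field_simps power2_eq_square algebra_simps)
    then have "A b * X (a - b) \<le> A b * (t / 2 + 1 / (2 * t) * (X (a - b))\<^sup>2)"
      using A(2) by (rule mult_left_mono)
    then show ?thesis by (simp add: algebra_simps)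
  qed
  then have "(\<Sum>\<^sub>\<infinity>b. A b * X (a - b)) \<le> (\<Sum>\<^sub>\<infinity>b. t / 2 * A b + 1 / (2 * t) * (A b * (X (a - b))\<^sup>2))"
    by (intro infsum_mono[OF s1 s3])
  also have "\<dots> = (\<Sum>\<^sub>\<infinity>b. t / 2 * A b) + (\<Sum>\<^sub>\<infinity>b. 1 / (2 * t) * (A b * (X (a - b))\<^sup>2))"
    by (intro infsum_add summable_on_cmult_right A(1) s2)
  also have "\<dots> = t / 2 * infsum A UNIV + 1 / (2 * t) * (\<Sum>\<^sub>\<infinity>b. A b * (X (a - b))\<^sup>2)"
    by (simp only: infsum_cmult_right A(1) s2)
  also have "\<dots> = (t * infsum A UNIV + (\<Sum>\<^sub>\<infinity>b. A b * (X (a - b))\<^sup>2) / t) / 2"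
    by (simp add: field_simps)
  finally show "(\<Sum>\<^sub>\<infinity>b. A b * X (a - b)) \<le> \<dots>" .
qed

lemma convolution_power2_summable:
  fixes A X :: "'a::ab_group_add \<Rightarrow> real"
  assumes A: "A summable_on UNIV" "\<And>b. 0 \<le> A b"
    and X: "(\<lambda>x. (X x)\<^sup>2) summable_on UNIV"
  shows "(\<lambda>a. \<Sum>\<^sub>\<infinity>b. A b * (X (a - b))\<^sup>2) summable_on UNIV"
proof -
  have "((\<lambda>x. A b * (X (x - b))\<^sup>2) has_sum (A b * infsum (\<lambda>x. (X x)\<^sup>2) UNIV)) UNIV" for b
    using X has_sum_shift[of "\<lambda>x. (X x)\<^sup>2" b] by (intro has_sum_cmult_right) simp
  then have "(\<lambda>(b, x). A b * (X (x - b))\<^sup>2) summable_on UNIV \<times> UNIV"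
    using summable_on_SigmaI[where f="\<lambda>(b, x). A b * (X (x - b))\<^sup>2" and A=UNIV and B="\<lambda>_. UNIV"
        and g="\<lambda>b. A b * infsum (\<lambda>x. (X x)\<^sup>2) UNIV"]
    by (simp add: A summable_on_cmult_left)
  then have "(\<lambda>(x, b). A b * (X (x - b))\<^sup>2) summable_on UNIV \<times> UNIV"
    by (subst summable_on_swap) (simp add: case_prod_unfold)
  then have "(\<lambda>x. \<Sum>\<^sub>\<infinity>y. (\<lambda>(x, b). A b * (X (x - b))\<^sup>2) (x, y)) summable_on UNIV"
    by (rule summable_on_SigmaD) (simp add: convolution_summable(2)[OF A X])
  then show ?thesis by simp
qed

lemma young_l1_l2:
  fixes A X :: "'a::ab_group_add \<Rightarrow> real"
  assumes A: "A summable_on UNIV" "\<And>b. 0 \<le> A b"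
    and X: "(\<lambda>x. (X x)\<^sup>2) summable_on UNIV" "\<And>x. 0 \<le> X x"
  shows "(\<lambda>a. (\<Sum>\<^sub>\<infinity>b. A b * X (a - b))\<^sup>2) summable_on UNIV"
  using convolution_power2_le[OF A X]
  by (intro summable_on_comparison_test[OF summable_on_cmult_right[OF convolution_power2_summable[OF A X(1)]]])
     auto

lemma convolution_pairing_summable:
  fixes A X Y :: "'a::ab_group_add \<Rightarrow> real"
  assumes A: "A summable_on UNIV" "\<And>b. 0 \<le> A b"
    and X: "(\<lambda>x. (X x)\<^sup>2) summable_on UNIV" "\<And>x. 0 \<le> X x"
    and Y: "(\<lambda>x. (Y x)\<^sup>2) summable_on UNIV" "\<And>x. 0 \<le> Y x"
  shows "(\<lambda>(x, b). A b * (X (x - b) * Y x)) summable_on UNIV \<times> UNIV"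
proof -
  define K where "K = 1 / 2 * (infsum (\<lambda>x. (X x)\<^sup>2) UNIV + infsum (\<lambda>x. (Y x)\<^sup>2) UNIV)"
  have mean_sum: "((\<lambda>x. 1 / 2 * ((X (x - b))\<^sup>2 + (Y x)\<^sup>2)) has_sum K) UNIV" for b
    unfolding K_def using X Y has_sum_shift[of "\<lambda>x. (X x)\<^sup>2" b]
    by (intro has_sum_cmult_right has_sum_add) auto
  have am_gm: "X (x - b) * Y x \<le> 1 / 2 * ((X (x - b))\<^sup>2 + (Y x)\<^sup>2)" for x b
    using zero_le_power2[of "X (x - b) - Y x"] by (simp add: power2_diff)
  have sXY: "(\<lambda>x. X (x - b) * Y x) summable_on UNIV" for b
    using am_gm X(2) Y(2) by (intro summable_on_comparison_test[OF has_sum_imp_summable[OF mean_sum]]) auto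
  have XY_le_K: "(\<Sum>\<^sub>\<infinity>x. X (x - b) * Y x) \<le> K" for b
    using infsum_mono[OF sXY has_sum_imp_summable[OF mean_sum] am_gm] infsumI[OF mean_sum] by simp
  have "(\<lambda>b. A b * (\<Sum>\<^sub>\<infinity>x. X (x - b) * Y x)) summable_on UNIV"
    using XY_le_K A(2) X(2) Y(2)
    by (intro summable_on_comparison_test[OF summable_on_cmult_left[OF A(1), of K]])
       (auto intro!: mult_left_mono mult_nonneg_nonneg infsum_nonneg)
  then have "(\<lambda>(b, x). A b * (X (x - b) * Y x)) summable_on UNIV \<times> UNIV"
    using sXY A(2) X(2) Y(2)
    by (intro summable_on_SigmaI[where g="\<lambda>b. A b * (\<Sum>\<^sub>\<infinity>x. X (x - b) * Y x)"])
       (auto intro!: has_sum_cmult_right has_sum_infsum)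
  then show ?thesis
    by (subst summable_on_swap) (simp add: case_prod_unfold)
qed

section \<open>Twisted convolution\<close>

lemma twisted_term_weighted_le:
  "weight y powr s * norm (cmat_scale (twist \<theta> b (y - b)) (a b ** xi (y - b)))
     \<le> (weight b powr \<bar>s\<bar> * norm (a b)) * (weight (y - b) powr s * norm (xi (y - b)))"
proof -
  have "weight y powr s * norm (cmat_scale (twist \<theta> b (y - b)) (a b ** xi (y - b)))
      \<le> weight y powr s * (norm (a b) * norm (xi (y - b)))"
    by (intro mult_left_mono) (simp_all add: norm_cmat_scale norm_matrix_mult_le)
  also have "\<dots> \<le> (weight b powr \<bar>s\<bar> * weight (y - b) powr s) * (norm (a b) * norm (xi (y - b)))"
    by (intro mult_right_mono weight_powr_peetre) simp
  finally show ?thesis by (simp add: algebra_simps)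
qed

lemma
  fixes a xi :: "('N::idx, 'n::finite) coeff"
  assumes a: "rapidly_decreasing a" and xi: "xi \<in> sobolev s"
  shows piop_terms_abs_summable:
      "(\<lambda>b. norm (cmat_scale (twist \<theta> b (y - b)) (a b ** xi (y - b)))) summable_on UNIV"
    and piop_sobolev: "piop \<theta> a xi \<in> sobolev s"
proof -
  define A where "A b = weight b powr \<bar>s\<bar> * norm (a b)" for b
  define X where "X c = weight c powr s * norm (xi c)" for c
  have sA: "A summable_on UNIV" using a unfolding A_def rapidly_decreasing_def by blast
  have sX: "(\<lambda>c. (X c)\<^sup>2) summable_on UNIV" using xi unfolding X_def sobolev_def by simp
  have A0: "0 \<le> A b" and X0: "0 \<le> X b" for b unfolding A_def X_def by simp_all
  note sAX = convolution_summable(1)[OF sA A0 sX]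
  have term_le: "norm (cmat_scale (twist \<theta> b (y - b)) (a b ** xi (y - b)))
      \<le> inverse (weight y powr s) * (A b * X (y - b))" for y b
    using twisted_term_weighted_le[of y s \<theta> b a xi] weight_powr_pos[of y s]
    by (simp add: A_def X_def field_simps)
  have abs: "(\<lambda>b. norm (cmat_scale (twist \<theta> b (y - b)) (a b ** xi (y - b)))) summable_on UNIV" for y
    by (rule summable_on_comparison_test[OF summable_on_cmult_right[OF sAX] term_le]) simp
  then show "(\<lambda>b. norm (cmat_scale (twist \<theta> b (y - b)) (a b ** xi (y - b)))) summable_on UNIV" .
  have "weight y powr s * norm (piop \<theta> a xi y) \<le> (\<Sum>\<^sub>\<infinity>b. A b * X (y - b))" for y
  proof -
    have "norm (piop \<theta> a xi y) \<le> (\<Sum>\<^sub>\<infinity>b. norm (cmat_scale (twist \<theta> b (y - b)) (a b ** xi (y - b))))"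
      unfolding piop_def by (rule norm_infsum_bound) (rule abs)
    also have "\<dots> \<le> (\<Sum>\<^sub>\<infinity>b. inverse (weight y powr s) * (A b * X (y - b)))"
      by (rule infsum_mono[OF abs summable_on_cmult_right[OF sAX] term_le])
    also have "\<dots> = inverse (weight y powr s) * (\<Sum>\<^sub>\<infinity>b. A b * X (y - b))"
      by (rule infsum_cmult_right[OF sAX])
    finally show ?thesis using weight_powr_pos[of y s] by (simp add: field_simps)
  qed
  then have "(weight y powr s * norm (piop \<theta> a xi y))\<^sup>2 \<le> (\<Sum>\<^sub>\<infinity>b. A b * X (y - b))\<^sup>2" for y
    by (intro power_mono) auto
  then show "piop \<theta> a xi \<in> sobolev s"
    unfolding sobolev_def
    by (auto intro: summable_on_comparison_test[OF young_l1_l2[OF sA A0 sX X0]])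
qed

lemma piop_terms_summable:
  fixes a xi :: "('N::idx, 'n::finite) coeff"
  assumes "rapidly_decreasing a" "xi \<in> sobolev s"
  shows "(\<lambda>b. cmat_scale (twist \<theta> b (y - b)) (a b ** xi (y - b))) summable_on UNIV"
  by (rule abs_summable_summable[OF piop_terms_abs_summable[OF assms]])

lemma cmat_inner_abs_summable:
  fixes xi eta :: "('N::finite, 'n::finite) coeff"
  assumes "xi \<in> sobolev s" "eta \<in> sobolev (- s)"
  shows "(\<lambda>x. norm (cmat_inner (xi x) (eta x))) summable_on UNIV"
proof -
  let ?X = "\<lambda>x. weight x powr s * norm (xi x)" and ?Y = "\<lambda>x. weight x powr (- s) * norm (eta x)"
  have "norm (cmat_inner (xi x) (eta x)) \<le> 1 / 2 * ((?X x)\<^sup>2 + (?Y x)\<^sup>2)" for x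
  proof -
    have "norm (cmat_inner (xi x) (eta x)) \<le> ?X x * ?Y x"
      using norm_cmat_inner_le[of "xi x" "eta x"] weight_powr_mult_minus[of x s]
      by (simp add: algebra_simps)
    also have "\<dots> \<le> 1 / 2 * ((?X x)\<^sup>2 + (?Y x)\<^sup>2)"
      using zero_le_power2[of "?X x - ?Y x"] by (simp add: power2_diff)
    finally show ?thesis .
  qed
  moreover have "(\<lambda>x. 1 / 2 * ((?X x)\<^sup>2 + (?Y x)\<^sup>2)) summable_on UNIV"
    using assms unfolding sobolev_def by (intro summable_on_cmult_right summable_on_add) auto
  ultimately show ?thesis
    by (auto intro: summable_on_comparison_test)
qed

lemma cmat_inner_summable:
  fixes xi eta :: "('N::finite, 'n::finite) coeff"
  assumes "xi \<in> sobolev s" "eta \<in> sobolev (- s)"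
  shows "(\<lambda>x. cmat_inner (xi x) (eta x)) summable_on UNIV"
  by (rule abs_summable_summable[OF cmat_inner_abs_summable[OF assms]])

lemma hinner_add_left:
  fixes xi1 xi2 eta :: "('N::finite, 'n::finite) coeff"
  assumes "xi1 \<in> sobolev s" "xi2 \<in> sobolev s" "eta \<in> sobolev (- s)"
  shows "hinner (\<lambda>x. xi1 x + xi2 x) eta = hinner xi1 eta + hinner xi2 eta"
  unfolding hinner_def cmat_inner_add_left
  by (intro infsum_add cmat_inner_summable[OF assms(1,3)] cmat_inner_summable[OF assms(2,3)])

lemma hinner_add_right:
  fixes xi eta1 eta2 :: "('N::finite, 'n::finite) coeff"
  assumes "xi \<in> sobolev s" "eta1 \<in> sobolev (- s)" "eta2 \<in> sobolev (- s)"
  shows "hinner xi (\<lambda>x. eta1 x + eta2 x) = hinner xi eta1 + hinner xi eta2"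
  unfolding hinner_def cmat_inner_add_right
  by (intro infsum_add cmat_inner_summable[OF assms(1,2)] cmat_inner_summable[OF assms(1,3)])

lemma hinner_uminus_left: "hinner (\<lambda>x. - xi x) eta = - hinner xi eta"
  unfolding hinner_def cmat_inner_minus_left by (rule infsum_uminus)

lemma hinner_uminus_right: "hinner xi (\<lambda>x. - eta x) = - hinner xi eta"
  unfolding hinner_def cmat_inner_minus_right by (rule infsum_uminus)

lemma hinner_sum_left:
  fixes f :: "'k \<Rightarrow> ('N::finite, 'n::finite) coeff"
  assumes "finite S" "\<And>k. k \<in> S \<Longrightarrow> f k \<in> sobolev s" "eta \<in> sobolev (- s)"
  shows "hinner (\<lambda>x. \<Sum>k\<in>S. f k x) eta = (\<Sum>k\<in>S. hinner (f k) eta)"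
  using assms
proof (induction S rule: finite_induct)
  case (insert k F)
  then show ?case
    by (simp add: hinner_add_left[where s=s] sobolev_sum)
qed (simp add: hinner_def cmat_inner_def)

lemma hinner_sum_right:
  fixes f :: "'k \<Rightarrow> ('N::finite, 'n::finite) coeff"
  assumes "finite S" "\<And>k. k \<in> S \<Longrightarrow> f k \<in> sobolev (- s)" "xi \<in> sobolev s"
  shows "hinner xi (\<lambda>x. \<Sum>k\<in>S. f k x) = (\<Sum>k\<in>S. hinner xi (f k))"
  using assms
proof (induction S rule: finite_induct)
  case (insert k F)
  then show ?case
    by (simp add: hinner_add_right[where s=s] sobolev_sum)
qed (simp add: hinner_def cmat_inner_def)

lemma Dop_skew: "hinner (Dop k xi) eta = - hinner xi (Dop k eta)"
proof -
  have "cmat_inner (Dop k xi x) (eta x) = - cmat_inner (xi x) (Dop k eta x)" for x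
    unfolding Dop_def cmat_inner_scale_left cmat_inner_scale_right by simp
  then show ?thesis unfolding hinner_def by (simp add: infsum_uminus)
qed

lemma Dop_sobolev:
  fixes xi :: "('N::finite, 'n::finite) coeff"
  assumes "xi \<in> sobolev (s + 1)"
  shows "Dop k xi \<in> sobolev s"
proof (rule sobolev_dominated[OF assms, where C=1])
  fix x
  have "norm (Dop k xi x) = \<bar>real_of_int (x $ k)\<bar> * norm (xi x)"
    unfolding Dop_def norm_cmat_scale by (simp add: norm_mult)
  also have "\<dots> \<le> weight x * norm (xi x)" by (intro mult_right_mono abs_component_le_weight) simp
  finally have "weight x powr s * norm (Dop k xi x) \<le> weight x powr s * (weight x * norm (xi x))"
    by (intro mult_left_mono) auto
  then show "weight x powr s * norm (Dop k xi x) \<le> 1 * (weight x powr (s + 1) * norm (xi x))"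
    using weight_pos[of x] by (simp add: powr_add)
qed

lemma skew_coeff_adj:
  assumes "nc_star \<theta> a = (\<lambda>x. - a x)"
  shows "cmat_adj (a (- b)) = - cmat_scale (twist \<theta> b (- b)) (a b)"
proof -
  have e: "cmat_scale (cnj (twist \<theta> b (- b))) (cmat_adj (a (- b))) = - a b"
    using fun_cong[OF assms, of b] unfolding nc_star_def by simp
  have "cmat_adj (a (- b)) = cmat_scale (twist \<theta> b (- b) * cnj (twist \<theta> b (- b))) (cmat_adj (a (- b)))"
    by (simp add: twist_eq_cis2pi cis2pi_mult_cnj)
  also have "\<dots> = cmat_scale (twist \<theta> b (- b)) (- a b)"
    by (simp add: cmat_scale_scale[symmetric] e)
  finally show ?thesis by (simp add: cmat_scale_uminus)
qed

text \<open>The kernel identity behind \<open>\<pi>(a)\<^sup>* = \<pi>(a\<^sup>*)\<close>, after the substitution \<open>(x, b) \<mapsto> (x - b, -b)\<close>.\<close>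
lemma twisted_term_adjoint:
  assumes "nc_star \<theta> a = (\<lambda>x. - a x)"
  shows "cmat_inner (cmat_scale (twist \<theta> (- b) y) (a (- b) ** X)) Y
       = - cmat_inner X (cmat_scale (twist \<theta> b (y - b)) (a b ** Y))"
proof -
  have "cmat_inner (cmat_scale (twist \<theta> (- b) y) (a (- b) ** X)) Y
      = cnj (twist \<theta> (- b) y) * cmat_inner X (cmat_adj (a (- b)) ** Y)"
    by (simp add: cmat_inner_scale_left cmat_inner_mult_left)
  also have "\<dots> = - ((cnj (twist \<theta> (- b) y) * twist \<theta> b (- b)) * cmat_inner X (a b ** Y))"
    by (simp add: skew_coeff_adj[OF assms] matrix_mult_uminus_left cmat_scale_mult_left
        cmat_inner_minus_right cmat_inner_scale_right)
  also have "\<dots> = - cmat_inner X (cmat_scale (twist \<theta> b (y - b)) (a b ** Y))"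
    by (simp add: twist_cocycle cmat_inner_scale_right)
  finally show ?thesis .
qed

lemma piop_pairing_kernel_summable:
  fixes a xi eta :: "('N::idx, 'n::finite) coeff"
  assumes a: "rapidly_decreasing a" and xi: "xi \<in> sobolev s" and eta: "eta \<in> sobolev (- s)"
  shows "(\<lambda>(x, b). cmat_inner (cmat_scale (twist \<theta> b (x - b)) (a b ** xi (x - b))) (eta x))
           summable_on UNIV \<times> UNIV" (is "?G summable_on _")
proof -
  define A where "A b = weight b powr \<bar>s\<bar> * norm (a b)" for b
  define X where "X c = weight c powr s * norm (xi c)" for c
  define Y where "Y c = weight c powr (- s) * norm (eta c)" for c
  have dominant: "(\<lambda>(x, b). A b * (X (x - b) * Y x)) summable_on UNIV \<times> UNIV"
    using a xi eta unfolding A_def X_def Y_def rapidly_decreasing_def sobolev_def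
    by (intro convolution_pairing_summable) auto
  have bound: "norm (cmat_inner (cmat_scale (twist \<theta> b (x - b)) (a b ** xi (x - b))) (eta x))
      \<le> A b * (X (x - b) * Y x)" for x b
  proof -
    let ?T = "cmat_scale (twist \<theta> b (x - b)) (a b ** xi (x - b))"
    have "norm (cmat_inner ?T (eta x)) \<le> (weight x powr s * weight x powr (- s)) * (norm ?T * norm (eta x))"
      using norm_cmat_inner_le[of ?T "eta x"] by (simp add: weight_powr_mult_minus)
    also have "\<dots> = (weight x powr s * norm ?T) * Y x"
      unfolding Y_def by (simp only: ac_simps)
    also have "\<dots> \<le> A b * X (x - b) * Y x"
      unfolding A_def X_def Y_def by (intro mult_right_mono twisted_term_weighted_le) simp
    finally show ?thesis by (simp add: mult.assoc)
  qed
  have "norm (?G p) \<le> (\<lambda>(x, b). A b * (X (x - b) * Y x)) p" for p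
    using bound by (cases p) simp
  then show ?thesis
    by (intro abs_summable_summable[OF summable_on_comparison_test[OF dominant]]) simp_all
qed

lemma piop_skew:
  fixes a xi eta :: "('N::idx, 'n::finite) coeff"
  assumes a: "rapidly_decreasing a" and skew: "nc_star \<theta> a = (\<lambda>x. - a x)"
    and xi: "xi \<in> sobolev s" and eta: "eta \<in> sobolev (- s)"
  shows "hinner (piop \<theta> a xi) eta = - hinner xi (piop \<theta> a eta)"
proof -
  define G where "G = (\<lambda>(x, b). cmat_inner (cmat_scale (twist \<theta> b (x - b)) (a b ** xi (x - b))) (eta x))"
  have sG: "G summable_on UNIV \<times> UNIV"
    unfolding G_def by (rule piop_pairing_kernel_summable[OF a xi eta])
  define j where "j = (\<lambda>(x, b). (x - b, - b :: (int, 'N) vec))"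
  have jj: "j (j p) = p" for p by (simp add: j_def case_prod_unfold)
  have Gj: "(\<Sum>\<^sub>\<infinity>b. (G \<circ> j) (y, b)) = - cmat_inner (xi y) (piop \<theta> a eta y)" for y
  proof -
    have "(\<Sum>\<^sub>\<infinity>b. (G \<circ> j) (y, b))
        = - (\<Sum>\<^sub>\<infinity>b. cmat_inner (xi y) (cmat_scale (twist \<theta> b (y - b)) (a b ** eta (y - b))))"
      unfolding G_def j_def by (simp add: twisted_term_adjoint[OF skew] infsum_uminus)
    also have "\<dots> = - cmat_inner (xi y) (piop \<theta> a eta y)"
      unfolding piop_def by (simp add: cmat_inner_infsum_right piop_terms_summable[OF a eta])
    finally show ?thesis .
  qed
  have "hinner (piop \<theta> a xi) eta = (\<Sum>\<^sub>\<infinity>x. \<Sum>\<^sub>\<infinity>b. G (x, b))"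
    unfolding hinner_def piop_def G_def
    by (simp add: cmat_inner_infsum_left piop_terms_summable[OF a xi])
  also have "\<dots> = infsum G (UNIV \<times> UNIV)"
    by (rule infsum_Sigma_banach[OF sG])
  also have "\<dots> = infsum (G \<circ> j) (UNIV \<times> UNIV)"
    by (rule infsum_reindex_bij_witness[where i=j and j=j, symmetric]) (auto simp: jj)
  also have "\<dots> = (\<Sum>\<^sub>\<infinity>y. \<Sum>\<^sub>\<infinity>b. (G \<circ> j) (y, b))"
  proof (rule infsum_Sigma_banach[symmetric])
    show "(G \<circ> j) summable_on UNIV \<times> UNIV"
      using sG by (subst summable_on_reindex_bij_witness[where i=j and j=j and h=G]) (auto simp: jj)
  qed
  also have "\<dots> = - hinner xi (piop \<theta> a eta)"
    unfolding hinner_def Gj by (rule infsum_uminus)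
  finally show ?thesis .
qed

section \<open>The operator \<open>H\<close>\<close>

definition Lap :: "('N::finite, 'n::finite) coeff \<Rightarrow> ('N, 'n) coeff" where
  "Lap xi = (\<lambda>\<alpha>. cmat_scale (complex_of_real (msq \<alpha>)) (xi \<alpha>))"

lemma Lap_eq_Hop_plus_first_order:
  "Lap xi \<alpha> = Hop \<theta> h xi \<alpha> + (\<Sum>k\<in>UNIV. Dop k (piop \<theta> (h k) xi) \<alpha> + piop \<theta> (h k) (nabla \<theta> h k xi) \<alpha>)"
proof -
  have DD: "Dop k (Dop k xi) \<alpha> = - cmat_scale (complex_of_real ((real_of_int (\<alpha> $ k))\<^sup>2)) (xi \<alpha>)" for k
    unfolding Dop_def cmat_scale_scale
    by (simp add: cmat_scale_minus[symmetric] power2_eq_square algebra_simps)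
  have NN: "nabla \<theta> h k (nabla \<theta> h k xi) \<alpha>
      = Dop k (Dop k xi) \<alpha> + (Dop k (piop \<theta> (h k) xi) \<alpha> + piop \<theta> (h k) (nabla \<theta> h k xi) \<alpha>)" for k
    unfolding nabla_def[of \<theta> h k "nabla \<theta> h k xi"] by (simp add: nabla_def Dop_def cmat_scale_add add.assoc)
  have "Lap xi \<alpha> = - (\<Sum>k\<in>UNIV. Dop k (Dop k xi) \<alpha>)"
    unfolding Lap_def msq_def by (simp add: cmat_scale_sum_left DD sum_negf)
  also have "\<dots> = Hop \<theta> h xi \<alpha> + (\<Sum>k\<in>UNIV. Dop k (piop \<theta> (h k) xi) \<alpha> + piop \<theta> (h k) (nabla \<theta> h k xi) \<alpha>)"
    unfolding Hop_def by (simp add: NN sum.distrib)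
  finally show ?thesis .
qed

lemma sobolev_add_2_if_Lap:
  fixes xi :: "('N::finite, 'n::finite) coeff"
  assumes "xi \<in> sobolev t" "Lap xi \<in> sobolev t"
  shows "xi \<in> sobolev (t + 2)"
proof (rule sobolev_dominated[OF sobolev_add[OF assms], where C="2 * (real CARD('N) + 1)"])
  fix \<alpha> :: "(int, 'N) vec"
  let ?K = "2 * (real CARD('N) + 1)"
  have "norm (xi \<alpha> + Lap xi \<alpha>) = norm (cmat_scale (complex_of_real (1 + msq \<alpha>)) (xi \<alpha>))"
    unfolding Lap_def by (simp add: cmat_scale_add_left)
  also have "\<dots> = (1 + msq \<alpha>) * norm (xi \<alpha>)"
    unfolding norm_cmat_scale norm_of_real using msq_nonneg[of \<alpha>] by simp
  finally have n: "norm (xi \<alpha> + Lap xi \<alpha>) = (1 + msq \<alpha>) * norm (xi \<alpha>)" .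
  have "weight \<alpha> powr (t + 2) * norm (xi \<alpha>) = weight \<alpha> powr t * ((weight \<alpha>)\<^sup>2 * norm (xi \<alpha>))"
    using weight_pos[of \<alpha>] by (simp add: powr_add power2_eq_square)
  also have "\<dots> \<le> weight \<alpha> powr t * ((?K * (1 + msq \<alpha>)) * norm (xi \<alpha>))"
    by (intro mult_left_mono mult_right_mono power2_weight_le_msq) auto
  also have "\<dots> = ?K * (weight \<alpha> powr t * norm (xi \<alpha> + Lap xi \<alpha>))"
    unfolding n by (simp add: algebra_simps)
  finally show "weight \<alpha> powr (t + 2) * norm (xi \<alpha>) \<le> ?K * (weight \<alpha> powr t * norm (xi \<alpha> + Lap xi \<alpha>))" .
qed

lemma dom_Delta_eq_sobolev: "(dom_Delta :: ('N::finite, 'n::finite) coeff set) = sobolev 2"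
proof (intro equalityI subsetI)
  fix xi :: "('N, 'n) coeff"
  assume "xi \<in> dom_Delta"
  then have "xi \<in> sobolev 0" "Lap xi \<in> sobolev 0"
    unfolding dom_Delta_def sobolev_0 Lap_def by auto
  from sobolev_add_2_if_Lap[OF this] show "xi \<in> sobolev 2" by simp
next
  fix xi :: "('N, 'n) coeff"
  assume xi: "xi \<in> sobolev 2"
  have "Lap xi \<in> sobolev 0"
  proof (rule sobolev_dominated[OF xi, where C=1])
    fix \<alpha> :: "(int, 'N) vec"
    have "norm (Lap xi \<alpha>) \<le> (weight \<alpha>)\<^sup>2 * norm (xi \<alpha>)"
      unfolding Lap_def norm_cmat_scale using msq_nonneg[of \<alpha>]
      by (simp add: mult_right_mono msq_le_power2_weight)
    then show "weight \<alpha> powr 0 * norm (Lap xi \<alpha>) \<le> 1 * (weight \<alpha> powr 2 * norm (xi \<alpha>))"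
      using weight_pos[of \<alpha>] by (simp add: powr_realpow)
  qed
  with sobolev_antimono[OF _ xi, of 0] show "xi \<in> dom_Delta"
    unfolding dom_Delta_def sobolev_0 Lap_def by auto
qed

context
  fixes \<theta> :: "((real, 'N::idx) vec, 'N) vec"
    and h :: "'N \<Rightarrow> (int, 'N) vec \<Rightarrow> complex ^ 'n::finite ^ 'n"
  assumes rapid: "\<And>k. rapidly_decreasing (h k)"
begin

lemma nabla_sobolev:
  assumes "phi \<in> sobolev (s + 1)"
  shows "nabla \<theta> h k phi \<in> sobolev s"
  unfolding nabla_def
  by (intro sobolev_add Dop_sobolev[OF assms] sobolev_antimono[of s "s + 1"] piop_sobolev[OF rapid assms])
     simp

lemma Hop_sobolev:
  assumes "xi \<in> sobolev (s + 2)"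
  shows "Hop \<theta> h xi \<in> sobolev s"
proof -
  have "nabla \<theta> h k (nabla \<theta> h k xi) \<in> sobolev s" for k
    by (rule nabla_sobolev, rule nabla_sobolev) (use assms in \<open>simp add: add.assoc\<close>)
  then show ?thesis
    unfolding Hop_def by (intro sobolev_uminus sobolev_sum)
qed

lemma Hop_regularity:
  assumes eta: "eta \<in> sobolev r" and H: "Hop \<theta> h eta \<in> sobolev (r - 1)"
  shows "eta \<in> sobolev (r + 1)"
proof -
  have eta': "eta \<in> sobolev ((r - 1) + 1)" using eta by simp
  have "(\<lambda>\<alpha>. Hop \<theta> h eta \<alpha> + (\<Sum>k\<in>UNIV. Dop k (piop \<theta> (h k) eta) \<alpha> + piop \<theta> (h k) (nabla \<theta> h k eta) \<alpha>))
      \<in> sobolev (r - 1)"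
    by (intro sobolev_add H sobolev_sum Dop_sobolev piop_sobolev[OF rapid] nabla_sobolev[OF eta']) (use eta in simp)
  then have "Lap eta \<in> sobolev (r - 1)"
    by (simp add: Lap_eq_Hop_plus_first_order[symmetric, abs_def])
  moreover have "eta \<in> sobolev (r - 1)"
    by (rule sobolev_antimono[OF _ eta]) simp
  ultimately have "eta \<in> sobolev (r - 1 + 2)"
    by (intro sobolev_add_2_if_Lap)
  then show ?thesis by (simp add: add.commute)
qed

lemma Hop_elliptic:
  assumes "eta \<in> L2" "Hop \<theta> h eta \<in> L2"
  shows "eta \<in> sobolev 2"
proof -
  have "eta \<in> sobolev (0 + 1)"
    using assms sobolev_antimono[of "0 - 1" 0] by (intro Hop_regularity) (auto simp: sobolev_0)
  then show ?thesis
    using Hop_regularity[of eta 1] assms by (simp add: sobolev_0)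
qed

context
  assumes skew: "\<And>k. nc_star \<theta> (h k) = (\<lambda>\<alpha>. - h k \<alpha>)"
begin

lemma nabla_skew:
  assumes phi: "phi \<in> sobolev (s + 1)" and psi: "psi \<in> sobolev (- s)"
  shows "hinner (nabla \<theta> h k phi) psi = - hinner phi (nabla \<theta> h k psi)"
proof -
  have phi': "phi \<in> sobolev s" and psi': "psi \<in> sobolev (- (s + 1))"
    by (rule sobolev_antimono[OF _ phi], simp, rule sobolev_antimono[OF _ psi], simp)
  have "hinner (nabla \<theta> h k phi) psi = hinner (Dop k phi) psi + hinner (piop \<theta> (h k) phi) psi"
    unfolding nabla_def
    by (intro hinner_add_left[OF Dop_sobolev[OF phi] _ psi] piop_sobolev[OF rapid phi'])
  also have "\<dots> = - hinner phi (Dop k psi) - hinner phi (piop \<theta> (h k) psi)"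
    using Dop_skew piop_skew[OF rapid skew phi psi'] by simp
  also have "\<dots> = - hinner phi (nabla \<theta> h k psi)"
    using psi piop_sobolev[OF rapid psi']
    by (simp add: nabla_def hinner_add_right[OF phi Dop_sobolev])
  finally show ?thesis .
qed

lemma Hop_symmetric:
  assumes xi: "xi \<in> sobolev 2" and eta: "eta \<in> L2"
  shows "hinner (Hop \<theta> h xi) eta = hinner xi (Hop \<theta> h eta)"
proof -
  have eta0: "eta \<in> sobolev (- 0)" using eta by (simp add: sobolev_0)
  have Nxi: "nabla \<theta> h k xi \<in> sobolev (0 + 1)" and Neta: "nabla \<theta> h k eta \<in> sobolev (- 1)" for k
    using xi eta0 by (auto intro: nabla_sobolev)
  have each: "hinner (nabla \<theta> h k (nabla \<theta> h k xi)) eta = hinner xi (nabla \<theta> h k (nabla \<theta> h k eta))" for k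
    using nabla_skew[OF Nxi eta0] nabla_skew[of xi 1 "nabla \<theta> h k eta" k] xi Neta by simp
  have "hinner (Hop \<theta> h xi) eta = - (\<Sum>k\<in>UNIV. hinner (nabla \<theta> h k (nabla \<theta> h k xi)) eta)"
    unfolding Hop_def hinner_uminus_left
    by (subst hinner_sum_left[where s=0]) (use Nxi eta0 in \<open>auto intro: nabla_sobolev\<close>)
  also have "\<dots> = - hinner xi (\<lambda>\<alpha>. \<Sum>k\<in>UNIV. nabla \<theta> h k (nabla \<theta> h k eta) \<alpha>)"
    unfolding each
    by (subst hinner_sum_right[where s=2]) (use Neta xi in \<open>auto intro: nabla_sobolev\<close>)
  also have "\<dots> = hinner xi (Hop \<theta> h eta)"
    unfolding Hop_def by (simp add: hinner_uminus_right)
  finally show ?thesis .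
qed

end

end

section \<open>Self-adjointness\<close>

lemma sobolev_dense_L2:
  fixes xi :: "('N::finite, 'n::finite) coeff"
  assumes xi: "xi \<in> L2" and e: "e > 0"
  shows "\<exists>psi\<in>sobolev s. (\<Sum>\<^sub>\<infinity>\<alpha>. (norm (xi \<alpha> - psi \<alpha>))\<^sup>2) < e"
proof -
  define f where "f \<alpha> = (norm (xi \<alpha>))\<^sup>2" for \<alpha>
  have sf: "f summable_on UNIV" using xi unfolding L2_def f_def by simp
  have "eventually (\<lambda>F. dist (sum f F) (infsum f UNIV) < e) (finite_subsets_at_top UNIV)"
    using has_sum_infsum[OF sf] e unfolding has_sum_def by (rule tendstoD)
  then obtain F where F: "finite F" "dist (sum f F) (infsum f UNIV) < e"
    unfolding eventually_finite_subsets_at_top by blast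
  define psi where "psi \<alpha> = (if \<alpha> \<in> F then xi \<alpha> else 0)" for \<alpha>
  have "psi \<in> sobolev s"
    by (rule sobolev_finite_support[OF F(1)]) (simp add: psi_def)
  moreover have "(\<Sum>\<^sub>\<infinity>\<alpha>. (norm (xi \<alpha> - psi \<alpha>))\<^sup>2) = infsum f (- F)"
    by (rule infsum_cong_neutral) (auto simp: psi_def f_def)
  moreover have "infsum f UNIV = infsum f F + infsum f (- F)"
    using infsum_Un_disjoint[of f F "- F"] F(1) sf
    by (simp add: summable_on_subset_banach[OF sf])
  moreover have "0 \<le> infsum f (- F)"
    by (intro infsum_nonneg) (simp add: f_def)
  ultimately show ?thesis
    using F by (intro bexI[where x=psi]) (auto simp: dist_real_def)
qed

definition matrix_unit :: "'n::finite \<Rightarrow> 'n \<Rightarrow> complex ^ 'n ^ 'n" where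
  "matrix_unit i j = (\<chi> a b. if a = i \<and> b = j then 1 else 0)"

lemma cmat_inner_matrix_unit: "cmat_inner (matrix_unit i j) B = B $ i $ j"
proof -
  have "cnj (matrix_unit i j $ a $ b) * B $ a $ b = (if a = i then (if b = j then B $ a $ b else 0) else 0)" for a b
    by (simp add: matrix_unit_def)
  then have "cmat_inner (matrix_unit i j) B = (\<Sum>a\<in>UNIV. \<Sum>b\<in>UNIV. if a = i then (if b = j then B $ a $ b else 0) else 0)"
    unfolding cmat_inner_def by presburger
  also have "\<dots> = (\<Sum>a\<in>UNIV. if a = i then (\<Sum>b\<in>UNIV. if b = j then B $ a $ b else 0) else 0)"
    by (intro sum.cong refl) auto
  finally show ?thesis by simp
qed

lemma hinner_point_matrix_unit:
  "hinner (\<lambda>\<alpha>. if \<alpha> = \<alpha>0 then matrix_unit i j else 0) phi = phi \<alpha>0 $ i $ j"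
proof -
  have "hinner (\<lambda>\<alpha>. if \<alpha> = \<alpha>0 then matrix_unit i j else 0) phi
      = (\<Sum>\<^sub>\<infinity>\<alpha>\<in>{\<alpha>0}. cmat_inner (if \<alpha> = \<alpha>0 then matrix_unit i j else 0) (phi \<alpha>))"
    unfolding hinner_def by (rule infsum_cong_neutral) (auto simp: cmat_inner_def)
  then show ?thesis by (simp add: cmat_inner_matrix_unit)
qed

lemma coeff_eqI_hinner_sobolev:
  fixes phi psi :: "('N::finite, 'n::finite) coeff"
  assumes "\<And>xi. xi \<in> sobolev s \<Longrightarrow> hinner xi phi = hinner xi psi"
  shows "phi = psi"
proof -
  have "phi \<alpha>0 $ i $ j = psi \<alpha>0 $ i $ j" for \<alpha>0 i j
  proof -
    define d :: "('N, 'n) coeff" where "d = (\<lambda>\<alpha>. if \<alpha> = \<alpha>0 then matrix_unit i j else 0)"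
    have "hinner d phi = hinner d psi"
      by (rule assms, rule sobolev_finite_support[of "{\<alpha>0}"]) (simp_all add: d_def)
    then show ?thesis by (simp add: d_def hinner_point_matrix_unit)
  qed
  then show ?thesis by (simp add: fun_eq_iff vec_eq_iff)
qed

lemma self_adjoint_opI:
  fixes T :: "('N::finite, 'n::finite) coeff \<Rightarrow> ('N, 'n) coeff"
  assumes maps: "\<And>xi. xi \<in> sobolev 2 \<Longrightarrow> T xi \<in> L2"
    and symmetric: "\<And>xi eta. xi \<in> sobolev 2 \<Longrightarrow> eta \<in> L2 \<Longrightarrow> hinner (T xi) eta = hinner xi (T eta)"
    and elliptic: "\<And>eta. eta \<in> L2 \<Longrightarrow> T eta \<in> L2 \<Longrightarrow> eta \<in> sobolev 2"
  shows "self_adjoint_op T (sobolev 2)"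
proof -
  have L2: "sobolev 2 \<subseteq> (L2 :: ('N, 'n) coeff set)"
    using sobolev_antimono[of 0 2] by (auto simp: sobolev_0)
  have adjoint: "eta \<in> sobolev 2 \<longleftrightarrow> (\<exists>zeta\<in>L2. \<forall>xi\<in>sobolev 2. hinner (T xi) eta = hinner xi zeta)"
    if eta: "eta \<in> L2" for eta
  proof
    assume "eta \<in> sobolev 2"
    then show "\<exists>zeta\<in>L2. \<forall>xi\<in>sobolev 2. hinner (T xi) eta = hinner xi zeta"
      using maps symmetric eta by blast
  next
    assume "\<exists>zeta\<in>L2. \<forall>xi\<in>sobolev 2. hinner (T xi) eta = hinner xi zeta"
    then obtain zeta where "zeta \<in> L2" "\<And>xi. xi \<in> sobolev 2 \<Longrightarrow> hinner xi (T eta) = hinner xi zeta"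
      using symmetric eta by metis
    with coeff_eqI_hinner_sobolev[of 2 "T eta" zeta] show "eta \<in> sobolev 2"
      using elliptic eta by auto
  qed
  show ?thesis
    unfolding self_adjoint_op_def
    using L2 maps adjoint symmetric sobolev_dense_L2[of _ _ 2] by blast
qed

theorem mainTheorem7:
  fixes \<theta> :: "((real, 'N::idx) vec, 'N) vec"
    and h :: "'N \<Rightarrow> (int, 'N) vec \<Rightarrow> complex ^ 'n::finite ^ 'n"
  assumes antisym: "\<forall>k l. \<theta> $ l $ k = - \<theta> $ k $ l"
    and smooth: "\<forall>k. smooth_elt (h k)"
    and skew: "\<forall>k. nc_star \<theta> (h k) = (\<lambda>\<alpha>. - h k \<alpha>)"
  shows "self_adjoint_op (Hop \<theta> h) dom_Delta"
proof -
  have rapid: "\<And>k. rapidly_decreasing (h k)"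
    using smooth smooth_elt_rapidly_decreasing by blast
  have skew': "\<And>k. nc_star \<theta> (h k) = (\<lambda>\<alpha>. - h k \<alpha>)"
    using skew by blast
  have "self_adjoint_op (Hop \<theta> h) (sobolev 2)"
  proof (rule self_adjoint_opI)
    show "Hop \<theta> h xi \<in> L2" if "xi \<in> sobolev 2" for xi
      using Hop_sobolev[OF rapid, of xi 0] that by (simp add: sobolev_0)
    show "hinner (Hop \<theta> h xi) eta = hinner xi (Hop \<theta> h eta)" if "xi \<in> sobolev 2" "eta \<in> L2" for xi eta
      by (rule Hop_symmetric[OF rapid skew' that])
    show "eta \<in> sobolev 2" if "eta \<in> L2" "Hop \<theta> h eta \<in> L2" for eta
      by (rule Hop_elliptic[OF rapid that])
  qed
  then show ?thesis
    by (simp add: dom_Delta_eq_sobolev)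
qed

end
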